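(* For every unweighted congestion game $\mathcal{G}$ with quadratic latency functions, $\mathrm{Apx}^1_\emptyset(\mathcal{G})\le 37.5888$.
   Context: A weighted congestion game consists of a finite set $[n]=\{1,\dots,n\}$ of players, a finite set $E$ of resources, for each player $i$ a weight $w_i>0$ and a nonempty finite strategy set $\Sigma_i\subseteq 2^E$, and for each resource $e$ a latency function $\ell_e:\mathbb{R}_{\ge 0}\to\mathbb{R}_{\ge 0}$. It is unweighted if $w_i=1$ for all $i$. Quadratic latency functions means $\ell_e(x)=\sum_{j=0}^{2}\alpha_{e,j}x^j$ with all $\alpha_{e,j}\ge 0$. For a (possibly partial) profile in which each player in some subset $P\subseteq[n]$ has chosen a strategy $s_i$, the congestion of $e$ is $L_e=\sum_{i\in P:\,e\in s_i}w_i$ and the cost of a player $i\in P$ is $\sum_{e\in s_i}\ell_e(L_e)$. For a full profile $S$, $\mathrm{SUM}(S)=\sum_{i\in[n]}c_i(S)$ and $S^*$ minimizes $\mathrm{SUM}$. A one-round walk from the empty strategy profile: starting with no player having chosen a strategy, the players arrive one at a time in some order, and each arriving player selects a best response, i.e., a strategy in her strategy set minimizing her cost given the strategies already chosen by the previously arrived players (later players not yet present); the outcome is the full profile after all $n$ players have chosen. $\mathrm{Apx}^1_\emptyset(\mathcal{G})$ is the maximum, over all orderings of the players and all choices among best responses, of $\mathrm{SUM}(\text{outcome})/\mathrm{SUM}(S^* )$. *)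

theory Defs
  imports Main "HOL-Library.Multiset" Complex_Main
begin

text \<open>Players are 0..<n; a (partial) profile is a
function s from players to strategies (sets of resources); only the players
in the set P of present players contribute to congestion.\<close>

definition load :: "nat set \<Rightarrow> (nat \<Rightarrow> 'e set) \<Rightarrow> 'e \<Rightarrow> nat" where
  "load P s e = card {i \<in> P. e \<in> s i}"

definition player_cost :: "('e \<Rightarrow> real \<Rightarrow> real) \<Rightarrow> nat set \<Rightarrow> (nat \<Rightarrow> 'e set) \<Rightarrow> nat \<Rightarrow> real" where
  "player_cost lat P s i = (\<Sum>e\<in>s i. lat e (real (load P s e)))"

definition SUM_cost :: "nat \<Rightarrow> ('e \<Rightarrow> real \<Rightarrow> real) \<Rightarrow> (nat \<Rightarrow> 'e set) \<Rightarrow> real" where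
  "SUM_cost n lat s = (\<Sum>i<n. player_cost lat {..<n} s i)"

text \<open>Player i, arriving when the players in P have already chosen (in s),
picks a best response s i.\<close>
definition best_response :: "(nat \<Rightarrow> 'e set set) \<Rightarrow> ('e \<Rightarrow> real \<Rightarrow> real) \<Rightarrow> nat set
    \<Rightarrow> (nat \<Rightarrow> 'e set) \<Rightarrow> nat \<Rightarrow> bool" where
  "best_response Strat lat P s i \<longleftrightarrow> s i \<in> Strat i \<and>
     (\<forall>t \<in> Strat i. player_cost lat (insert i P) s i \<le> player_cost lat (insert i P) (s(i := t)) i)"

definition one_round_walk :: "nat \<Rightarrow> (nat \<Rightarrow> 'e set set) \<Rightarrow> ('e \<Rightarrow> real \<Rightarrow> real)
    \<Rightarrow> nat list \<Rightarrow> (nat \<Rightarrow> 'e set) \<Rightarrow> bool" where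
  "one_round_walk n Strat lat ord s \<longleftrightarrow> distinct ord \<and> set ord = {..<n} \<and>
     (\<forall>k < length ord. best_response Strat lat (set (take k ord)) s (ord ! k))"

definition quadratic_latency :: "('e \<Rightarrow> real \<Rightarrow> real) \<Rightarrow> 'e set \<Rightarrow> bool" where
  "quadratic_latency lat E \<longleftrightarrow> (\<forall>e\<in>E. \<exists>a0 a1 a2::real. a0 \<ge> 0 \<and> a1 \<ge> 0 \<and> a2 \<ge> 0 \<and>
      (\<forall>x\<ge>0. lat e x = a0 + a1 * x + a2 * x^2))"

end

theory Submission
  imports Defs
begin

(* Let x_e and y_e be the loads of resource e in the walk outcome s and in the
   comparison profile S, and Phi the Rosenthal potential of s.  Since each
   arriving player best-responds and latencies are nondecreasing, her cost at
   arrival is at most her cost for deviating to S_i against the final loads, so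
   the potential of s is bounded by  Q = sum_i sum_{e in S_i} l_e(x_e + 1).
   For quadratic latencies a per-resource inequality with
   lam = 3309/625 and mu = 23493/625 = 37.5888 holds:
       x l(x) + lam y l(x+1) <= lam (l(1) + ... + l(x)) + mu y l(y).
   Summed over resources it reads  SUM(s) + lam Q <= lam Phi + mu SUM(S),
   and Phi <= Q gives SUM(s) <= mu SUM(S). *)

section \<open>The per-resource inequality for quadratic latencies\<close>

lemma sum_first_reals:
  "(\<Sum>j=1..x. real j) = real x * (real x + 1) / 2"
  by (induction x) (simp_all add: field_simps)

lemma sum_first_squares:
  "(\<Sum>j=1..x. real j ^ 2) = real x * (real x + 1) * (2 * real x + 1) / 6"
  by (induction x) (simp_all add: field_simps power2_eq_square)

lemma gap_constant:
  fixes x y :: nat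
  shows "real x + (3309/625) * real y \<le> (3309/625) * real x + (23493/625) * real y"
  by simp

lemma gap_linear:
  fixes x y :: nat
  shows "real x * real x + (3309/625) * real y * (real x + 1)
    \<le> (3309/625) * (\<Sum>j=1..x. real j) + (23493/625) * real y * real y"
proof (cases "y = 0")
  case True
  then show ?thesis unfolding sum_first_reals by (simp add: field_simps)
next
  case False
  then have "real y ^ 2 - real y \<ge> 0" by (simp add: power2_eq_square)
  moreover have
    "(23493/625) * real y^2 + (3309/625) * (real x * (real x + 1) / 2)
       - real x^2 - (3309/625) * real y * (real x + 1)
     = (2059/1250) * (real x - (16071/10000) * real y)^2
       + ((23493/625) - (2059/1250) * (16071/10000)^2) * (real y^2 - real y)
       + ((23493/625) - (2059/1250) * (16071/10000)^2 - (3309/625)) * real y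
       + (3309/1250) * real x
       + (2 * (2059/1250) * (16071/10000) - (3309/625)) * (real x * real y)"
    by (simp add: field_simps power2_eq_square)
  ultimately have "(23493/625) * real y^2 + (3309/625) * (real x * (real x + 1) / 2)
       - real x^2 - (3309/625) * real y * (real x + 1) \<ge> 0"
    by (simp only:) (intro add_nonneg_nonneg mult_nonneg_nonneg; simp add: power2_eq_square)
  then show ?thesis unfolding sum_first_reals by (simp add: power2_eq_square)
qed

text \<open>A cubic estimate used for large x in the quadratic case; its proof is a
  sum of squares certificate around the point y = (5417/25000) u.\<close>
lemma cubic_estimate:
  fixes y u :: real
  assumes "y \<ge> 0" "u \<ge> 0"
  shows "(3309/625) * y * u^2 \<le> (23493/625) * y^3 + (478/625) * u^3"
proof -
  define c :: real where "c = 5417/25000"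
  have "(23493/625) * y^3 + (478/625) * u^3 - (3309/625) * y * u^2
      = (y - c * u)^2 * ((23493/625) * y + 2 * (23493/625) * c * u)
      + (3 * (23493/625) * c^2 - 3309/625) * y * u^2 + (478/625 - 2 * (23493/625) * c^3) * u^3"
    by (simp add: c_def algebra_simps power2_eq_square power3_eq_cube)
  moreover have "3 * (23493/625) * c^2 - 3309/625 \<ge> 0" "478/625 - 2 * (23493/625) * c^3 \<ge> 0" "c \<ge> 0"
    by (simp_all add: c_def power2_eq_square power3_eq_cube)
  ultimately have "(23493/625) * y^3 + (478/625) * u^3 - (3309/625) * y * u^2 \<ge> 0"
    using assms by (simp only:) (intro add_nonneg_nonneg mult_nonneg_nonneg; simp)
  then show ?thesis by linarith
qed

text \<open>The inequality for the quadratic monomial.  It is tight near x = 4, y = 1,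
  which is where the constant 37.5888 comes from; small cases are checked
  directly, large x via the cubic estimate.\<close>
lemma gap_quadratic:
  fixes x y :: nat
  shows "real x * real x ^ 2 + (3309/625) * real y * (real x + 1) ^ 2
    \<le> (3309/625) * (\<Sum>j=1..x. real j ^ 2) + (23493/625) * real y * real y ^ 2"
proof -
  have cube_le_sum: "real x ^ 3 \<le> (3309/625) * (real x * (real x + 1) * (2 * real x + 1) / 6)"
    by (simp add: algebra_simps power2_eq_square power3_eq_cube)
  have "real x ^ 3 + (3309/625) * real y * (real x + 1) ^ 2
    \<le> (3309/625) * (real x * (real x + 1) * (2 * real x + 1) / 6) + (23493/625) * real y ^ 3"
  proof -
    consider "y = 0" | "x \<ge> 5" | "y = 1" "x \<le> 4" | "y \<ge> 2" "x \<le> 4" by linarith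
    then show ?thesis
    proof cases
      case 1
      then show ?thesis using cube_le_sum by simp
    next
      case 2
      have "(3309/625) * real y * (real x + 1)^2 \<le> (23493/625) * real y^3 + (478/625) * (real x + 1)^3"
        by (rule cubic_estimate) auto
      moreover have "(3309/625) * (real x * (real x + 1) * (2 * real x + 1) / 6) - real x^3
          - (478/625) * (real x + 1)^3 = (441/1250) * real x^2 - (353/250) * real x - 478/625"
        by (simp add: algebra_simps power2_eq_square power3_eq_cube)
      moreover have "real x ^ 2 \<ge> 5 * real x"
        using 2 by (simp add: power2_eq_square)
      then have "(441/1250) * real x^2 - (353/250) * real x - 478/625 \<ge> 0"
        using 2 by simp
      ultimately show ?thesis by linarith
    next
      case 3
      then have "x \<in> {0, 1, 2, 3, 4}" by auto
      then show ?thesis using 3 by (auto simp: power2_eq_square power3_eq_cube)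
    next
      case 4
      have "(2::real) ^ 2 \<le> real y ^ 2"
        using 4 by (intro power_mono) auto
      then have "real y * 4 \<le> real y * real y ^ 2"
        by (intro mult_left_mono) auto
      then have "real y * 4 \<le> real y ^ 3"
        by (simp add: power3_eq_cube power2_eq_square mult.assoc)
      moreover have "(real x + 1) ^ 2 \<le> 5 ^ 2"
        using 4 by (intro power_mono) auto
      then have "(3309/625) * real y * (real x + 1)^2 \<le> (3309/625) * real y * 25"
        by (intro mult_left_mono) auto
      ultimately show ?thesis using cube_le_sum by linarith
    qed
  qed
  then show ?thesis
    unfolding sum_first_squares by (simp add: power2_eq_square power3_eq_cube)
qed

lemma quadratic_per_resource:
  fixes f :: "real \<Rightarrow> real" and x y :: nat
  assumes coeffs: "a0 \<ge> 0" "a1 \<ge> 0" "a2 \<ge> 0"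
    and f: "\<And>z. z \<ge> 0 \<Longrightarrow> f z = a0 + a1 * z + a2 * z^2"
  shows "real x * f (real x) + (3309/625) * real y * f (real x + 1)
     \<le> (3309/625) * (\<Sum>j=1..x. f (real j)) + (23493/625) * real y * f (real y)"
proof -
  define L0 R0 L1 R1 L2 R2 where
    L0_def: "L0 = real x + (3309/625) * real y"
    and R0_def: "R0 = (3309/625) * real x + (23493/625) * real y"
    and L1_def: "L1 = real x * real x + (3309/625) * real y * (real x + 1)"
    and R1_def: "R1 = (3309/625) * (\<Sum>j=1..x. real j) + (23493/625) * real y * real y"
    and L2_def: "L2 = real x * real x ^ 2 + (3309/625) * real y * (real x + 1) ^ 2"
    and R2_def: "R2 = (3309/625) * (\<Sum>j=1..x. real j ^ 2) + (23493/625) * real y * real y ^ 2"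
  have sum_f: "(\<Sum>j=1..x. f (real j))
      = a0 * real x + a1 * (\<Sum>j=1..x. real j) + a2 * (\<Sum>j=1..x. real j ^ 2)"
    using f by (simp add: sum.distrib sum_distrib_left)
  have "real x * f (real x) + (3309/625) * real y * f (real x + 1) = a0 * L0 + a1 * L1 + a2 * L2"
    unfolding L0_def L1_def L2_def using f by (simp add: algebra_simps)
  also have "\<dots> \<le> a0 * R0 + a1 * R1 + a2 * R2"
  proof -
    have "L0 \<le> R0" "L1 \<le> R1" "L2 \<le> R2"
      unfolding L0_def R0_def L1_def R1_def L2_def R2_def
      by (rule gap_constant gap_linear gap_quadratic)+
    then show ?thesis using coeffs by (intro add_mono mult_left_mono)
  qed
  also have "\<dots> = (3309/625) * (\<Sum>j=1..x. f (real j)) + (23493/625) * real y * f (real y)"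
    unfolding R0_def R1_def R2_def sum_f using f by (simp add: field_simps)
  finally show ?thesis .
qed

lemma load_insert:
  assumes "finite P" "i \<notin> P"
  shows "load (insert i P) s e = load P s e + (if e \<in> s i then 1 else 0)"
proof -
  have "{j \<in> insert i P. e \<in> s j} = (if e \<in> s i then insert i {j \<in> P. e \<in> s j} else {j \<in> P. e \<in> s j})"
    by auto
  then show ?thesis using assms by (simp add: load_def)
qed

lemma load_fun_upd_absent: "i \<notin> P \<Longrightarrow> load P (s(i := t)) e = load P s e"
  unfolding load_def by (rule arg_cong[where f = card]) auto

lemma load_mono: "finite Q \<Longrightarrow> P \<subseteq> Q \<Longrightarrow> load P s e \<le> load Q s e"
  unfolding load_def by (rule card_mono) auto

lemma sum_players_eq_sum_resources:
  assumes "finite E" "\<And>i. i < n \<Longrightarrow> T i \<subseteq> E"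
  shows "(\<Sum>i<n. \<Sum>e\<in>T i. g e) = (\<Sum>e\<in>E. real (load {..<n} T e) * g e)"
proof -
  have "(\<Sum>i<n. \<Sum>e\<in>T i. g e) = (\<Sum>i<n. \<Sum>e\<in>E. if e \<in> T i then g e else 0)"
  proof (rule sum.cong[OF refl])
    fix i assume "i \<in> {..<n}"
    then have "{e \<in> E. e \<in> T i} = T i" using assms(2) by auto
    then show "(\<Sum>e\<in>T i. g e) = (\<Sum>e\<in>E. if e \<in> T i then g e else 0)"
      using sum.inter_filter[OF assms(1), of g "\<lambda>e. e \<in> T i"] by simp
  qed
  also have "\<dots> = (\<Sum>e\<in>E. \<Sum>i<n. if e \<in> T i then g e else 0)"
    by (rule sum.swap)
  also have "\<dots> = (\<Sum>e\<in>E. real (load {..<n} T e) * g e)"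
  proof (rule sum.cong[OF refl])
    fix e
    have "(\<Sum>i<n. if e \<in> T i then g e else 0) = (\<Sum>i\<in>{i\<in>{..<n}. e \<in> T i}. g e)"
      by (rule sum.inter_filter[symmetric]) simp
    then show "(\<Sum>i<n. if e \<in> T i then g e else 0) = real (load {..<n} T e) * g e"
      by (simp add: load_def)
  qed
  finally show ?thesis .
qed

lemma SUM_cost_by_resources:
  assumes "finite E" "\<And>i. i < n \<Longrightarrow> T i \<subseteq> E"
  shows "SUM_cost n lat T = (\<Sum>e\<in>E. real (load {..<n} T e) * lat e (real (load {..<n} T e)))"
  unfolding SUM_cost_def player_cost_def by (rule sum_players_eq_sum_resources[OF assms])

section \<open>Rosenthal's potential\<close>

definition rosenthal :: "'e set \<Rightarrow> ('e \<Rightarrow> real \<Rightarrow> real) \<Rightarrow> nat set \<Rightarrow> (nat \<Rightarrow> 'e set) \<Rightarrow> real" where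
  "rosenthal E lat P s = (\<Sum>e\<in>E. \<Sum>j=1..load P s e. lat e (real j))"

lemma rosenthal_insert:
  assumes "finite E" "finite P" "i \<notin> P" "s i \<subseteq> E"
  shows "rosenthal E lat (insert i P) s = rosenthal E lat P s + player_cost lat (insert i P) s i"
proof -
  have "rosenthal E lat (insert i P) s = (\<Sum>e\<in>E. (\<Sum>j=1..load P s e. lat e (real j))
      + (if e \<in> s i then lat e (real (load P s e + 1)) else 0))"
    unfolding rosenthal_def using assms by (intro sum.cong) (auto simp: load_insert)
  also have "\<dots> = rosenthal E lat P s + (\<Sum>e\<in>E. if e \<in> s i then lat e (real (load P s e + 1)) else 0)"
    unfolding rosenthal_def by (simp add: sum.distrib)
  also have "(\<Sum>e\<in>E. if e \<in> s i then lat e (real (load P s e + 1)) else 0)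
      = (\<Sum>e\<in>s i. lat e (real (load P s e + 1)))"
  proof -
    have "{e \<in> E. e \<in> s i} = s i" using assms(4) by auto
    then show ?thesis
      using sum.inter_filter[OF assms(1), of "\<lambda>e. lat e (real (load P s e + 1))" "\<lambda>e. e \<in> s i"]
      by simp
  qed
  also have "\<dots> = player_cost lat (insert i P) s i"
    unfolding player_cost_def using assms by (intro sum.cong) (auto simp: load_insert)
  finally show ?thesis .
qed

section \<open>One-round walks\<close>

lemma one_round_walk_order:
  assumes "one_round_walk n Strat lat ord s"
  shows "length ord = n" and "\<And>k. k < n \<Longrightarrow> ord ! k < n"
    and "\<And>k. k < n \<Longrightarrow> ord ! k \<notin> set (take k ord)"
proof -
  have dist: "distinct ord" and set_ord: "set ord = {..<n}"
    using assms unfolding one_round_walk_def by auto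
  show len: "length ord = n"
    using distinct_card[OF dist] set_ord by simp
  show "ord ! k < n" if "k < n" for k
    using nth_mem[of k ord] that len set_ord by auto
  show "ord ! k \<notin> set (take k ord)" if "k < n" for k
  proof -
    have "distinct (take (Suc k) ord)" using dist by simp
    then show ?thesis using that len by (simp add: take_Suc_conv_app_nth)
  qed
qed

lemma one_round_walk_strategies:
  assumes "one_round_walk n Strat lat ord s" "i < n"
  shows "s i \<in> Strat i"
proof -
  have "i \<in> set ord" using assms unfolding one_round_walk_def by auto
  then obtain k where "k < length ord" "ord ! k = i" by (auto simp: in_set_conv_nth)
  then show ?thesis using assms(1) unfolding one_round_walk_def best_response_def by auto
qed

text \<open>Since latencies are nondecreasing and loads only grow during the walk,
  the cost of the k-th arriving player is at most what she would pay for
  joining S_i against the final loads of the outcome.\<close>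
lemma arrival_cost_le_deviation:
  assumes walk: "one_round_walk n Strat lat ord s" and "k < n"
    and S: "\<forall>i<n. S i \<in> Strat i" "\<forall>i<n. S i \<subseteq> E"
    and mono: "\<And>e a b. e \<in> E \<Longrightarrow> 0 \<le> a \<Longrightarrow> a \<le> b \<Longrightarrow> lat e a \<le> lat e b"
  shows "player_cost lat (insert (ord ! k) (set (take k ord))) s (ord ! k)
    \<le> (\<Sum>e\<in>S (ord ! k). lat e (real (load {..<n} s e) + 1))"
proof -
  let ?i = "ord ! k" and ?P = "set (take k ord)"
  have i: "?i < n" "?i \<notin> ?P" using one_round_walk_order(2,3)[OF walk] \<open>k < n\<close> by auto
  have P_sub: "?P \<subseteq> {..<n}"
    using walk set_take_subset unfolding one_round_walk_def by metis
  have "best_response Strat lat ?P s ?i"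
    using walk \<open>k < n\<close> one_round_walk_order(1)[OF walk] unfolding one_round_walk_def by auto
  then have "player_cost lat (insert ?i ?P) s ?i \<le> player_cost lat (insert ?i ?P) (s(?i := S ?i)) ?i"
    using S(1) i(1) unfolding best_response_def by auto
  also have "\<dots> = (\<Sum>e\<in>S ?i. lat e (real (load ?P s e + 1)))"
    unfolding player_cost_def using i(2)
    by (intro sum.cong) (auto simp: load_insert load_fun_upd_absent)
  also have "\<dots> \<le> (\<Sum>e\<in>S ?i. lat e (real (load {..<n} s e) + 1))"
  proof (rule sum_mono)
    fix e assume "e \<in> S ?i"
    then have "e \<in> E" using S(2) i(1) by auto
    moreover have "load ?P s e \<le> load {..<n} s e" using P_sub by (intro load_mono) auto
    ultimately show "lat e (real (load ?P s e + 1)) \<le> lat e (real (load {..<n} s e) + 1)"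
      using mono by simp
  qed
  finally show ?thesis .
qed

text \<open>The potential of the outcome is bounded by the total deviation cost:
  the potential grows by the arrival cost of each player in turn.\<close>
lemma one_round_walk_potential_bound:
  assumes "finite E" and walk: "one_round_walk n Strat lat ord s"
    and strat: "\<forall>i<n. Strat i \<subseteq> Pow E"
    and S: "\<forall>i<n. S i \<in> Strat i"
    and mono: "\<And>e a b. e \<in> E \<Longrightarrow> 0 \<le> a \<Longrightarrow> a \<le> b \<Longrightarrow> lat e a \<le> lat e b"
  shows "rosenthal E lat {..<n} s \<le> (\<Sum>i<n. \<Sum>e\<in>S i. lat e (real (load {..<n} s e) + 1))"
proof -
  define dev where "dev i = (\<Sum>e\<in>S i. lat e (real (load {..<n} s e) + 1))" for i
  have len: "length ord = n" by (rule one_round_walk_order(1)[OF walk])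
  have dist: "distinct ord" and set_ord: "set ord = {..<n}"
    using walk unfolding one_round_walk_def by auto
  have S_E: "\<forall>i<n. S i \<subseteq> E" using S strat by auto
  have prefix: "rosenthal E lat (set (take k ord)) s \<le> (\<Sum>m<k. dev (ord ! m))" if "k \<le> n" for k
    using that
  proof (induction k)
    case 0
    then show ?case by (simp add: rosenthal_def load_def)
  next
    case (Suc k)
    then have k: "k < n" by simp
    have "s (ord ! k) \<subseteq> E"
      using one_round_walk_strategies[OF walk] one_round_walk_order(2)[OF walk k] strat by blast
    then have "rosenthal E lat (set (take (Suc k) ord)) s = rosenthal E lat (set (take k ord)) s
        + player_cost lat (insert (ord ! k) (set (take k ord))) s (ord ! k)"
      using k len one_round_walk_order(3)[OF walk k]
      by (simp add: take_Suc_conv_app_nth rosenthal_insert[OF \<open>finite E\<close>])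
    then show ?case
      using Suc arrival_cost_le_deviation[OF walk k S S_E mono] unfolding dev_def by simp
  qed
  have "(\<Sum>m<n. dev (ord ! m)) = (\<Sum>i<n. dev i)"
  proof -
    have "(\<Sum>m<n. dev (ord ! m)) = sum_list (map dev ord)"
      using len by (simp add: sum_list_sum_nth atLeast0LessThan)
    also have "\<dots> = sum dev (set ord)"
      using dist by (simp add: sum.distinct_set_conv_list)
    finally show ?thesis using set_ord by simp
  qed
  moreover have "set (take n ord) = {..<n}"
    using len set_ord by simp
  ultimately show ?thesis using prefix[of n] unfolding dev_def by simp
qed

lemma one_round_walk_approximation:
  assumes "finite E" and walk: "one_round_walk n Strat lat ord s"
    and strat: "\<forall>i<n. Strat i \<subseteq> Pow E"
    and S: "\<forall>i<n. S i \<in> Strat i"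
    and mono: "\<And>e a b. e \<in> E \<Longrightarrow> 0 \<le> a \<Longrightarrow> a \<le> b \<Longrightarrow> lat e a \<le> lat e b"
    and "lam \<ge> 0"
    and per_resource: "\<And>e x y. e \<in> E \<Longrightarrow>
      real x * lat e (real x) + lam * real y * lat e (real x + 1)
        \<le> lam * (\<Sum>j=1..x. lat e (real j)) + mu * real y * lat e (real y)"
  shows "SUM_cost n lat s \<le> mu * SUM_cost n lat S"
proof -
  define x where "x e = load {..<n} s e" for e
  define y where "y e = load {..<n} S e" for e
  define dev where "dev = (\<Sum>i<n. \<Sum>e\<in>S i. lat e (real (x e) + 1))"
  have s_E: "\<And>i. i < n \<Longrightarrow> s i \<subseteq> E"
    using one_round_walk_strategies[OF walk] strat by blast
  have S_E: "\<And>i. i < n \<Longrightarrow> S i \<subseteq> E" using S strat by blast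
  have dev_by_resources: "dev = (\<Sum>e\<in>E. real (y e) * lat e (real (x e) + 1))"
    unfolding dev_def y_def by (rule sum_players_eq_sum_resources[OF \<open>finite E\<close> S_E])
  have cost_s: "SUM_cost n lat s = (\<Sum>e\<in>E. real (x e) * lat e (real (x e)))"
    unfolding x_def by (rule SUM_cost_by_resources[OF \<open>finite E\<close> s_E])
  have cost_S: "SUM_cost n lat S = (\<Sum>e\<in>E. real (y e) * lat e (real (y e)))"
    unfolding y_def by (rule SUM_cost_by_resources[OF \<open>finite E\<close> S_E])
  have "SUM_cost n lat s + lam * dev
      = (\<Sum>e\<in>E. real (x e) * lat e (real (x e)) + lam * real (y e) * lat e (real (x e) + 1))"
    unfolding cost_s dev_by_resources by (simp add: sum.distrib sum_distrib_left mult.assoc)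
  also have "\<dots> \<le> (\<Sum>e\<in>E. lam * (\<Sum>j=1..x e. lat e (real j)) + mu * real (y e) * lat e (real (y e)))"
    by (intro sum_mono per_resource)
  also have "\<dots> = lam * rosenthal E lat {..<n} s + mu * SUM_cost n lat S"
    unfolding cost_S rosenthal_def x_def by (simp add: sum.distrib sum_distrib_left mult.assoc)
  also have "\<dots> \<le> lam * dev + mu * SUM_cost n lat S"
    using one_round_walk_potential_bound[OF \<open>finite E\<close> walk strat S mono] \<open>lam \<ge> 0\<close>
    unfolding dev_def x_def by (simp add: mult_left_mono)
  finally show ?thesis by simp
qed

lemma quadratic_latency_properties:
  assumes "quadratic_latency lat E" "e \<in> E"
  shows "\<And>a b. 0 \<le> a \<Longrightarrow> a \<le> b \<Longrightarrow> lat e a \<le> lat e b"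
    and "\<And>x y. real x * lat e (real x) + (3309/625) * real y * lat e (real x + 1)
        \<le> (3309/625) * (\<Sum>j=1..x. lat e (real j)) + (23493/625) * real y * lat e (real y)"
proof -
  obtain a0 a1 a2 :: real where coeffs: "a0 \<ge> 0" "a1 \<ge> 0" "a2 \<ge> 0"
    and lat: "\<And>z. z \<ge> 0 \<Longrightarrow> lat e z = a0 + a1 * z + a2 * z^2"
    using assms unfolding quadratic_latency_def by blast
  show "lat e a \<le> lat e b" if "0 \<le> a" "a \<le> b" for a b
  proof -
    have "a1 * a \<le> a1 * b" "a2 * a^2 \<le> a2 * b^2"
      using coeffs that by (auto intro: mult_left_mono power_mono)
    then show ?thesis using lat that by simp
  qed
  show "real x * lat e (real x) + (3309/625) * real y * lat e (real x + 1)
      \<le> (3309/625) * (\<Sum>j=1..x. lat e (real j)) + (23493/625) * real y * lat e (real y)" for x y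
    by (rule quadratic_per_resource[OF coeffs lat])
qed

theorem mainTheorem11:
  fixes n :: nat and E :: "'e set" and Strat :: "nat \<Rightarrow> 'e set set"
    and lat :: "'e \<Rightarrow> real \<Rightarrow> real" and ord :: "nat list" and s S :: "nat \<Rightarrow> 'e set"
  assumes "finite E"
    and "\<forall>i<n. Strat i \<noteq> {} \<and> finite (Strat i) \<and> Strat i \<subseteq> Pow E"
    and "quadratic_latency lat E"
    and "one_round_walk n Strat lat ord s"
    and "\<forall>i<n. S i \<in> Strat i"
  shows "SUM_cost n lat s \<le> 37.5888 * SUM_cost n lat S"
proof -
  have strat: "\<forall>i<n. Strat i \<subseteq> Pow E" using assms(2) by blast
  note quadratic = quadratic_latency_properties[OF assms(3)]
  have "SUM_cost n lat s \<le> (23493/625) * SUM_cost n lat S"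
    using one_round_walk_approximation[OF assms(1,4) strat assms(5) quadratic(1) _ quadratic(2)]
    by simp
  then show ?thesis by simp
qed

end
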